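(* Given a Moore-Penrose dagger additive category $(\mathbb{X}, \dagger)$ and any object $X \in \mathbb{X}$, $\mathfrak{G}\left[ (\mathbb{X}, \dagger) \right]_X$ is a Markov category with conditionals. In particular, given a map $F= \left( \begin{bmatrix} f \\ g \end{bmatrix}, \begin{bmatrix} \alpha & \beta \\ \beta^\dagger & \delta \end{bmatrix}, \begin{bmatrix} s \\ t \end{bmatrix} \right): A \to B \otimes C$ in $\mathfrak{G}\left[ (\mathbb{X}, \dagger) \right]_X$, the map $F\vert_B: B \otimes A \to C$ defined as the triple: \begin{align*} F\vert_B = \left( \begin{bmatrix} \beta^\dagger \circ \alpha^\circ & g - \beta^\dagger \circ \alpha^\circ \circ f \end{bmatrix}, \delta - \beta^\dagger \circ \alpha^\circ \circ \beta, t - \beta^\dagger \circ \alpha^\circ \circ s \right) \end{align*} is a conditional of $F$.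
   Context: A dagger additive category $(\mathbb{X}, \dagger)$ is a dagger category enriched in abelian groups with additive dagger and finite biproducts satisfying $\pi_j^\dagger = \iota_j$; maps between biproducts are written as matrices and the dagger acts as conjugate transpose. A Moore-Penrose inverse of $f: A \to B$ is a map $f^\circ: B \to A$ with $f \circ f^\circ \circ f = f$, $f^\circ \circ f \circ f^\circ = f^\circ$, $(f \circ f^\circ)^\dagger = f \circ f^\circ$, $(f^\circ \circ f)^\dagger = f^\circ \circ f$; $(\mathbb{X},\dagger)$ is Moore-Penrose if every map has one. A map $p$ is $\dagger$-positive if $p = \phi^\dagger \circ \phi$ for some $\phi$. For an object $X$, the Gauss construction $\mathfrak{G}\left[ (\mathbb{X}, \dagger) \right]_X$ is the Markov category with the objects of $\mathbb{X}$, maps $A \to B$ the triples $(f,p,x)$ with $f: A \to B$, $p: B \to B$ $\dagger$-positive, $x: X \to B$; identities $\mathsf{Id}_A = (\mathsf{id}_A,0,0)$; composition $(g,q,y) \circ (f,p,x) = (g \circ f, q + g \circ p \circ g^\dagger, y + g \circ x)$; $A \otimes B = A \oplus B$, $(f,p,x) \otimes (g,q,y) = \left(f \oplus g, p \oplus q, \begin{bmatrix} x \\ y \end{bmatrix}\right)$, unit the zero object $\mathsf{0}$; copy $\mathsf{copy}_A = \left(\begin{bmatrix} \mathsf{id}_A \\ \mathsf{id}_A \end{bmatrix}, 0, 0\right)$, delete $\mathsf{del}_A = (0,0,0): A \to \mathsf{0}$. In $F$, $f: A \to B$, $g: A \to C$, $\alpha: B \to B$, $\beta: C \to B$, $\delta: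 C \to C$, $s: X \to B$, $t: X \to C$. A map $G: B \otimes A \to C$ is a conditional of $F: A \to B \otimes C$ if $(\mathsf{Id}_B \otimes G) \circ (\mathsf{copy}_B \otimes \mathsf{Id}_A) \circ (\mathsf{Id}_B \otimes \mathsf{del}_C \otimes \mathsf{Id}_A) \circ (F \otimes \mathsf{Id}_A) \circ \mathsf{copy}_A = F$; a Markov category with conditionals is one in which every map $A \to B \otimes C$ has a conditional. *)

theory Defs
  imports Main
begin

text \<open>A category is presented by a type 'o of objects and a type 'm of morphisms
(every element of 'm is a morphism), with source/target, composition
(cmp g f = g after f, meaningful when tgt f = src g), identities, the abelian group
enrichment (cadd, cneg, czero A B : A -> B), the dagger, chosen binary biproducts
bip A B with projections pr1, pr2 (injections are their daggers), and a zero object.\<close>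

record ('o, 'm) dacat =
  src  :: "'m \<Rightarrow> 'o"
  tgt  :: "'m \<Rightarrow> 'o"
  cmp  :: "'m \<Rightarrow> 'm \<Rightarrow> 'm"
  cid  :: "'o \<Rightarrow> 'm"
  cadd :: "'m \<Rightarrow> 'm \<Rightarrow> 'm"
  cneg :: "'m \<Rightarrow> 'm"
  czero :: "'o \<Rightarrow> 'o \<Rightarrow> 'm"
  dag  :: "'m \<Rightarrow> 'm"
  bip  :: "'o \<Rightarrow> 'o \<Rightarrow> 'o"
  pr1  :: "'o \<Rightarrow> 'o \<Rightarrow> 'm"
  pr2  :: "'o \<Rightarrow> 'o \<Rightarrow> 'm"
  zobj :: "'o"

definition hom :: "('o, 'm, 'x) dacat_scheme \<Rightarrow> 'o \<Rightarrow> 'o \<Rightarrow> 'm set" where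
  "hom K A B = {f. src K f = A \<and> tgt K f = B}"

definition csub :: "('o, 'm, 'x) dacat_scheme \<Rightarrow> 'm \<Rightarrow> 'm \<Rightarrow> 'm" where
  "csub K a b = cadd K a (cneg K b)"

definition dagger_additive_cat :: "('o, 'm, 'x) dacat_scheme \<Rightarrow> bool" where
  "dagger_additive_cat K \<longleftrightarrow>
     \<comment> \<open>category\<close>
     (\<forall>A. src K (cid K A) = A \<and> tgt K (cid K A) = A)
   \<and> (\<forall>f g. tgt K f = src K g \<longrightarrow> src K (cmp K g f) = src K f \<and> tgt K (cmp K g f) = tgt K g)
   \<and> (\<forall>f. cmp K f (cid K (src K f)) = f \<and> cmp K (cid K (tgt K f)) f = f)
   \<and> (\<forall>f g h. tgt K f = src K g \<and> tgt K g = src K h \<longrightarrow>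
        cmp K h (cmp K g f) = cmp K (cmp K h g) f)
     \<comment> \<open>enrichment in abelian groups\<close>
   \<and> (\<forall>A B. czero K A B \<in> hom K A B)
   \<and> (\<forall>f g. src K f = src K g \<and> tgt K f = tgt K g \<longrightarrow>
        src K (cadd K f g) = src K f \<and> tgt K (cadd K f g) = tgt K f)
   \<and> (\<forall>f. src K (cneg K f) = src K f \<and> tgt K (cneg K f) = tgt K f)
   \<and> (\<forall>f g h. src K f = src K g \<and> tgt K f = tgt K g \<and> src K g = src K h \<and> tgt K g = tgt K h \<longrightarrow>
        cadd K (cadd K f g) h = cadd K f (cadd K g h))
   \<and> (\<forall>f g. src K f = src K g \<and> tgt K f = tgt K g \<longrightarrow> cadd K f g = cadd K g f)
   \<and> (\<forall>f. cadd K f (czero K (src K f) (tgt K f)) = f)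
   \<and> (\<forall>f. cadd K f (cneg K f) = czero K (src K f) (tgt K f))
   \<and> (\<forall>f g h. src K f = src K g \<and> tgt K f = tgt K g \<and> tgt K f = src K h \<longrightarrow>
        cmp K h (cadd K f g) = cadd K (cmp K h f) (cmp K h g))
   \<and> (\<forall>f g h. src K f = src K g \<and> tgt K f = tgt K g \<and> src K f = tgt K h \<longrightarrow>
        cmp K (cadd K f g) h = cadd K (cmp K f h) (cmp K g h))
     \<comment> \<open>additive dagger\<close>
   \<and> (\<forall>f. src K (dag K f) = tgt K f \<and> tgt K (dag K f) = src K f)
   \<and> (\<forall>f. dag K (dag K f) = f)
   \<and> (\<forall>A. dag K (cid K A) = cid K A)
   \<and> (\<forall>f g. tgt K f = src K g \<longrightarrow> dag K (cmp K g f) = cmp K (dag K f) (dag K g))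
   \<and> (\<forall>f g. src K f = src K g \<and> tgt K f = tgt K g \<longrightarrow>
        dag K (cadd K f g) = cadd K (dag K f) (dag K g))
     \<comment> \<open>binary biproducts with injections = daggers of projections\<close>
   \<and> (\<forall>A B. pr1 K A B \<in> hom K (bip K A B) A \<and> pr2 K A B \<in> hom K (bip K A B) B
        \<and> cmp K (pr1 K A B) (dag K (pr1 K A B)) = cid K A
        \<and> cmp K (pr2 K A B) (dag K (pr2 K A B)) = cid K B
        \<and> cmp K (pr1 K A B) (dag K (pr2 K A B)) = czero K B A
        \<and> cmp K (pr2 K A B) (dag K (pr1 K A B)) = czero K A B
        \<and> cadd K (cmp K (dag K (pr1 K A B)) (pr1 K A B)) (cmp K (dag K (pr2 K A B)) (pr2 K A B))
            = cid K (bip K A B))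
     \<comment> \<open>zero object (empty biproduct)\<close>
   \<and> (\<forall>f. src K f = zobj K \<longrightarrow> f = czero K (zobj K) (tgt K f))
   \<and> (\<forall>f. tgt K f = zobj K \<longrightarrow> f = czero K (src K f) (zobj K))"

definition mp_inverse :: "('o, 'm, 'x) dacat_scheme \<Rightarrow> 'm \<Rightarrow> 'm \<Rightarrow> bool" where
  "mp_inverse K f h \<longleftrightarrow> src K h = tgt K f \<and> tgt K h = src K f
     \<and> cmp K f (cmp K h f) = f \<and> cmp K h (cmp K f h) = h
     \<and> dag K (cmp K f h) = cmp K f h \<and> dag K (cmp K h f) = cmp K h f"

definition moore_penrose :: "('o, 'm, 'x) dacat_scheme \<Rightarrow> bool" where
  "moore_penrose K \<longleftrightarrow> (\<forall>f. \<exists>h. mp_inverse K f h)"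

definition dag_positive :: "('o, 'm, 'x) dacat_scheme \<Rightarrow> 'm \<Rightarrow> bool" where
  "dag_positive K p \<longleftrightarrow> (\<exists>\<phi>. p = cmp K (dag K \<phi>) \<phi>)"

text \<open>col2 x y = [x; y] : D -> tgt x (+) tgt y;  row2 x y = [x  y] : src x (+) src y -> E;
 mat2 a b c d = [[a, b], [c, d]].\<close>

definition col2 :: "('o, 'm, 'x) dacat_scheme \<Rightarrow> 'm \<Rightarrow> 'm \<Rightarrow> 'm" where
  "col2 K x y = cadd K (cmp K (dag K (pr1 K (tgt K x) (tgt K y))) x)
                       (cmp K (dag K (pr2 K (tgt K x) (tgt K y))) y)"

definition row2 :: "('o, 'm, 'x) dacat_scheme \<Rightarrow> 'm \<Rightarrow> 'm \<Rightarrow> 'm" where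
  "row2 K x y = cadd K (cmp K x (pr1 K (src K x) (src K y)))
                       (cmp K y (pr2 K (src K x) (src K y)))"

definition mat2 :: "('o, 'm, 'x) dacat_scheme \<Rightarrow> 'm \<Rightarrow> 'm \<Rightarrow> 'm \<Rightarrow> 'm \<Rightarrow> 'm" where
  "mat2 K a b c d = col2 K (row2 K a b) (row2 K c d)"

definition dsum :: "('o, 'm, 'x) dacat_scheme \<Rightarrow> 'm \<Rightarrow> 'm \<Rightarrow> 'm" where
  "dsum K f g = mat2 K f (czero K (src K g) (tgt K f)) (czero K (src K f) (tgt K g)) g"

type_synonym 'm gmor = "'m \<times> 'm \<times> 'm"

definition gmap :: "('o, 'm, 'x) dacat_scheme \<Rightarrow> 'o \<Rightarrow> 'o \<Rightarrow> 'o \<Rightarrow> 'm gmor \<Rightarrow> bool" where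
  "gmap K X A B F = (case F of (f, p, x) \<Rightarrow>
      f \<in> hom K A B \<and> p \<in> hom K B B \<and> dag_positive K p \<and> x \<in> hom K X B)"

definition gid :: "('o, 'm, 'x) dacat_scheme \<Rightarrow> 'o \<Rightarrow> 'o \<Rightarrow> 'm gmor" where
  "gid K X A = (cid K A, czero K A A, czero K X A)"

definition gcomp :: "('o, 'm, 'x) dacat_scheme \<Rightarrow> 'm gmor \<Rightarrow> 'm gmor \<Rightarrow> 'm gmor" where
  "gcomp K G F = (case G of (g, q, y) \<Rightarrow> case F of (f, p, x) \<Rightarrow>
      (cmp K g f, cadd K q (cmp K g (cmp K p (dag K g))), cadd K y (cmp K g x)))"

definition gtensor :: "('o, 'm, 'x) dacat_scheme \<Rightarrow> 'm gmor \<Rightarrow> 'm gmor \<Rightarrow> 'm gmor" where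
  "gtensor K F G = (case F of (f, p, x) \<Rightarrow> case G of (g, q, y) \<Rightarrow>
      (dsum K f g, dsum K p q, col2 K x y))"

definition gcopy :: "('o, 'm, 'x) dacat_scheme \<Rightarrow> 'o \<Rightarrow> 'o \<Rightarrow> 'm gmor" where
  "gcopy K X A = (col2 K (cid K A) (cid K A), czero K (bip K A A) (bip K A A), czero K X (bip K A A))"

definition gdel :: "('o, 'm, 'x) dacat_scheme \<Rightarrow> 'o \<Rightarrow> 'o \<Rightarrow> 'm gmor" where
  "gdel K X A = (czero K A (zobj K), czero K (zobj K) (zobj K), czero K X (zobj K))"

text \<open>Lifting a map h of the base category to (h, 0, 0); used for the structural
isomorphisms (associator, unitor) of the monoidal structure, which the paper leaves implicit.\<close>

definition glift :: "('o, 'm, 'x) dacat_scheme \<Rightarrow> 'o \<Rightarrow> 'm \<Rightarrow> 'm gmor" where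
  "glift K X h = (h, czero K (tgt K h) (tgt K h), czero K X (tgt K h))"

definition bassoc :: "('o, 'm, 'x) dacat_scheme \<Rightarrow> 'o \<Rightarrow> 'o \<Rightarrow> 'o \<Rightarrow> 'm" where
  "bassoc K A B C =
     col2 K (cmp K (pr1 K A B) (pr1 K (bip K A B) C))
            (col2 K (cmp K (pr2 K A B) (pr1 K (bip K A B) C)) (pr2 K (bip K A B) C))"

text \<open>G : B (x) A -> C is a conditional of F : A -> B (x) C :
 (Id_B (x) G) o (copy_B (x) Id_A) o (Id_B (x) del_C (x) Id_A) o (F (x) Id_A) o copy_A = F,
 with the associators and the left unitor 0 (x) A -> A inserted explicitly.\<close>

definition is_conditional ::
  "('o, 'm, 'x) dacat_scheme \<Rightarrow> 'o \<Rightarrow> 'o \<Rightarrow> 'o \<Rightarrow> 'o \<Rightarrow> 'm gmor \<Rightarrow> 'm gmor \<Rightarrow> bool" where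
  "is_conditional K X A B C F G \<longleftrightarrow>
     gmap K X (bip K B A) C G \<and>
     gcomp K (gtensor K (gid K X B) G)
      (gcomp K (glift K X (bassoc K B B A))
       (gcomp K (gtensor K (gcopy K X B) (gid K X A))
        (gcomp K (gtensor K (gid K X B) (glift K X (pr2 K (zobj K) A)))
         (gcomp K (gtensor K (gid K X B) (gtensor K (gdel K X C) (gid K X A)))
          (gcomp K (glift K X (bassoc K B C A))
           (gcomp K (gtensor K F (gid K X A))
            (gcopy K X A))))))) = F"

end

theory Submission
  imports Defs
begin

(*
  Write a positive covariance as p = \<phi>\<^sup>\<dagger>\<phi> with \<phi> = [\<phi>\<^sub>1 \<phi>\<^sub>2], so that \<alpha> = \<phi>\<^sub>1\<^sup>\<dagger>\<phi>\<^sub>1, \<beta> = \<phi>\<^sub>1\<^sup>\<dagger>\<phi>\<^sub>2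
  and \<delta> = \<phi>\<^sub>2\<^sup>\<dagger>\<phi>\<^sub>2. A Moore-Penrose inverse of \<phi>\<^sub>1 shows \<phi>\<^sub>1\<alpha>\<^sup>\<circ>\<alpha> = \<phi>\<^sub>1, hence
  \<beta>\<^sup>\<dagger>\<alpha>\<^sup>\<circ>\<alpha> = \<beta>\<^sup>\<dagger> and, taking daggers, \<alpha>\<alpha>\<^sup>\<circ>\<^sup>\<dagger>\<beta> = \<beta>: the cross-covariance lies in the
  range of \<alpha>, so the regression coefficient \<beta>\<^sup>\<dagger>\<alpha>\<^sup>\<circ> reproduces it. Moreover \<phi>\<^sub>1\<alpha>\<^sup>\<circ>\<phi>\<^sub>1\<^sup>\<dagger> is the self-adjoint idempotent
  Q = \<phi>\<^sub>1\<phi>\<^sub>1\<^sup>\<circ>, so the Schur complement \<delta> - \<beta>\<^sup>\<dagger>\<alpha>\<^sup>\<circ>\<beta> = \<phi>\<^sub>2\<^sup>\<dagger>(1 - Q)\<phi>\<^sub>2 is positive.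
  Composing a candidate conditional ([k h], q, y) with the B-marginal (f, \<alpha>, s) of F yields the
  blocks f, k f + h, \<alpha>, \<alpha>k\<^sup>\<dagger>, q + k\<alpha>k\<^sup>\<dagger> and s, y + k s; for k = \<beta>\<^sup>\<dagger>\<alpha>\<^sup>\<circ> the two identities
  above turn these back into the blocks of F. Every map into B \<oplus> C has this block form.
*)

definition conditional_composite ::
  "('o, 'm, 'x) dacat_scheme \<Rightarrow> 'o \<Rightarrow> 'o \<Rightarrow> 'o \<Rightarrow> 'o \<Rightarrow> 'm gmor \<Rightarrow> 'm gmor \<Rightarrow> 'm gmor" where
  "conditional_composite K X A B C F G =
     gcomp K (gtensor K (gid K X B) G)
      (gcomp K (glift K X (bassoc K B B A))
       (gcomp K (gtensor K (gcopy K X B) (gid K X A))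
        (gcomp K (gtensor K (gid K X B) (glift K X (pr2 K (zobj K) A)))
         (gcomp K (gtensor K (gid K X B) (gtensor K (gdel K X C) (gid K X A)))
          (gcomp K (glift K X (bassoc K B C A))
           (gcomp K (gtensor K F (gid K X A))
            (gcopy K X A)))))))"

lemma is_conditional_iff:
  "is_conditional K X A B C F G \<longleftrightarrow>
     gmap K X (bip K B A) C G \<and> conditional_composite K X A B C F G = F"
  unfolding is_conditional_def conditional_composite_def ..

locale dagger_additive_category =
  fixes K :: "('o, 'm, 'x) dacat_scheme"
  assumes dagger_additive: "dagger_additive_cat K"
begin

abbreviation comp (infixr "\<cdot>" 70) where "g \<cdot> f \<equiv> cmp K g f"
abbreviation plus (infixl "\<boxplus>" 65) where "f \<boxplus> g \<equiv> cadd K f g"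
abbreviation uminus ("\<boxminus>_" [81] 80) where "\<boxminus>f \<equiv> cneg K f"
abbreviation dagger ("_\<^sup>\<dagger>" [1000] 1000) where "f\<^sup>\<dagger> \<equiv> dag K f"

lemmas structure_laws = dagger_additive[unfolded dagger_additive_cat_def hom_def mem_Collect_eq]

lemma src_cid [simp]: "src K (cid K A) = A" and tgt_cid [simp]: "tgt K (cid K A) = A"
  by (simp_all add: structure_laws)

lemma src_cmp [simp]: "tgt K f = src K g \<Longrightarrow> src K (g \<cdot> f) = src K f"
  and tgt_cmp [simp]: "tgt K f = src K g \<Longrightarrow> tgt K (g \<cdot> f) = tgt K g"
  by (simp_all add: structure_laws)

lemma cmp_cid [simp]: "src K f = A \<Longrightarrow> f \<cdot> cid K A = f"
  and cid_cmp [simp]: "tgt K f = B \<Longrightarrow> cid K B \<cdot> f = f"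
  by (auto simp: structure_laws)

lemma cmp_assoc [simp]:
  "tgt K f = src K g \<Longrightarrow> tgt K g = src K h \<Longrightarrow> (h \<cdot> g) \<cdot> f = h \<cdot> (g \<cdot> f)"
  by (simp add: structure_laws)

lemma src_czero [simp]: "src K (czero K A B) = A" and tgt_czero [simp]: "tgt K (czero K A B) = B"
  by (simp_all add: structure_laws)

lemma src_cadd [simp]: "src K f = src K g \<Longrightarrow> tgt K f = tgt K g \<Longrightarrow> src K (f \<boxplus> g) = src K f"
  and tgt_cadd [simp]: "src K f = src K g \<Longrightarrow> tgt K f = tgt K g \<Longrightarrow> tgt K (f \<boxplus> g) = tgt K f"
  by (simp_all add: structure_laws)

lemma src_cneg [simp]: "src K (\<boxminus>f) = src K f" and tgt_cneg [simp]: "tgt K (\<boxminus>f) = tgt K f"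
  by (simp_all add: structure_laws)

lemma cadd_assoc [simp]:
  "src K f = src K g \<Longrightarrow> tgt K f = tgt K g \<Longrightarrow> src K g = src K h \<Longrightarrow> tgt K g = tgt K h \<Longrightarrow>
   (f \<boxplus> g) \<boxplus> h = f \<boxplus> (g \<boxplus> h)"
  using structure_laws by (elim conjE) blast

lemma cadd_commute: "src K f = src K g \<Longrightarrow> tgt K f = tgt K g \<Longrightarrow> f \<boxplus> g = g \<boxplus> f"
  by (simp add: structure_laws)

lemma cadd_czero_right [simp]: "src K f = A \<Longrightarrow> tgt K f = B \<Longrightarrow> f \<boxplus> czero K A B = f"
  by (auto simp: structure_laws)

lemma cadd_cneg_right [simp]: "src K f = A \<Longrightarrow> tgt K f = B \<Longrightarrow> f \<boxplus> (\<boxminus>f) = czero K A B"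
  by (simp add: structure_laws)

lemma cmp_cadd [simp]:
  "src K f = src K g \<Longrightarrow> tgt K f = tgt K g \<Longrightarrow> tgt K f = src K h \<Longrightarrow> h \<cdot> (f \<boxplus> g) = h \<cdot> f \<boxplus> h \<cdot> g"
  by (simp add: structure_laws)

lemma cadd_cmp [simp]:
  "src K f = src K g \<Longrightarrow> tgt K f = tgt K g \<Longrightarrow> src K f = tgt K h \<Longrightarrow> (f \<boxplus> g) \<cdot> h = f \<cdot> h \<boxplus> g \<cdot> h"
  by (simp add: structure_laws)

lemma src_dag [simp]: "src K (f\<^sup>\<dagger>) = tgt K f" and tgt_dag [simp]: "tgt K (f\<^sup>\<dagger>) = src K f"
  by (simp_all add: structure_laws)

lemma dag_dag [simp]: "f\<^sup>\<dagger>\<^sup>\<dagger> = f" and dag_cid [simp]: "(cid K A)\<^sup>\<dagger> = cid K A"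
  by (simp_all add: structure_laws)

lemma dag_cmp [simp]: "tgt K f = src K g \<Longrightarrow> (g \<cdot> f)\<^sup>\<dagger> = f\<^sup>\<dagger> \<cdot> g\<^sup>\<dagger>"
  by (simp add: structure_laws)

lemma dag_cadd [simp]: "src K f = src K g \<Longrightarrow> tgt K f = tgt K g \<Longrightarrow> (f \<boxplus> g)\<^sup>\<dagger> = f\<^sup>\<dagger> \<boxplus> g\<^sup>\<dagger>"
  by (simp add: structure_laws)

lemma src_pr1 [simp]: "src K (pr1 K A B) = bip K A B" and tgt_pr1 [simp]: "tgt K (pr1 K A B) = A"
  and src_pr2 [simp]: "src K (pr2 K A B) = bip K A B" and tgt_pr2 [simp]: "tgt K (pr2 K A B) = B"
  by (simp_all add: structure_laws)

lemma pr1_dag_pr1 [simp]: "pr1 K A B \<cdot> (pr1 K A B)\<^sup>\<dagger> = cid K A"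
  and pr2_dag_pr2 [simp]: "pr2 K A B \<cdot> (pr2 K A B)\<^sup>\<dagger> = cid K B"
  and pr1_dag_pr2 [simp]: "pr1 K A B \<cdot> (pr2 K A B)\<^sup>\<dagger> = czero K B A"
  and pr2_dag_pr1 [simp]: "pr2 K A B \<cdot> (pr1 K A B)\<^sup>\<dagger> = czero K A B"
  and biproduct_cid: "(pr1 K A B)\<^sup>\<dagger> \<cdot> pr1 K A B \<boxplus> (pr2 K A B)\<^sup>\<dagger> \<cdot> pr2 K A B = cid K (bip K A B)"
  by (simp_all add: structure_laws)


lemma cadd_idem_eq_czero:
  assumes "src K a = A" "tgt K a = B" "a \<boxplus> a = a"
  shows "a = czero K A B"
proof -
  have "a = a \<boxplus> (a \<boxplus> (\<boxminus>a))" using assms by simp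
  also have "\<dots> = (a \<boxplus> a) \<boxplus> (\<boxminus>a)" using assms by (intro cadd_assoc[symmetric]) simp_all
  also have "\<dots> = czero K A B" using assms by simp
  finally show ?thesis .
qed

lemma cadd_czero_left [simp]: "src K f = A \<Longrightarrow> tgt K f = B \<Longrightarrow> czero K A B \<boxplus> f = f"
  by (metis cadd_commute cadd_czero_right src_czero tgt_czero)

lemma cadd_cneg_left [simp]: "src K f = A \<Longrightarrow> tgt K f = B \<Longrightarrow> (\<boxminus>f) \<boxplus> f = czero K A B"
  by (metis cadd_commute cadd_cneg_right src_cneg tgt_cneg)

lemma cmp_czero [simp]: "src K h = B \<Longrightarrow> h \<cdot> czero K A B = czero K A (tgt K h)"
  by (rule cadd_idem_eq_czero) (simp_all flip: cmp_cadd)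

lemma czero_cmp [simp]: "tgt K f = A \<Longrightarrow> czero K A B \<cdot> f = czero K (src K f) B"
  by (rule cadd_idem_eq_czero) (simp_all flip: cadd_cmp)

lemma dag_czero [simp]: "(czero K A B)\<^sup>\<dagger> = czero K B A"
  by (rule cadd_idem_eq_czero) (simp_all flip: dag_cadd)

lemma cneg_unique:
  assumes "src K a = A" "tgt K a = B" "src K b = A" "tgt K b = B" "a \<boxplus> b = czero K A B"
  shows "b = \<boxminus>a"
proof -
  have "b = (\<boxminus>a \<boxplus> a) \<boxplus> b" using assms by simp
  also have "\<dots> = \<boxminus>a \<boxplus> (a \<boxplus> b)" using assms by (intro cadd_assoc) simp_all
  also have "\<dots> = \<boxminus>a" using assms by simp
  finally show ?thesis .
qed

lemma cneg_cneg [simp]: "\<boxminus>(\<boxminus>f) = f"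
  by (rule cneg_unique[symmetric, of "\<boxminus>f" "src K f" "tgt K f"]) simp_all

lemma cneg_czero [simp]: "\<boxminus>(czero K A B) = czero K A B"
  by (rule cneg_unique[symmetric, of "czero K A B" A B]) simp_all

lemma cmp_cneg [simp]: "tgt K f = src K h \<Longrightarrow> h \<cdot> (\<boxminus>f) = \<boxminus>(h \<cdot> f)"
  by (rule cneg_unique[of _ "src K f" "tgt K h"]) (simp_all flip: cmp_cadd)

lemma cneg_cmp [simp]: "tgt K h = src K f \<Longrightarrow> (\<boxminus>f) \<cdot> h = \<boxminus>(f \<cdot> h)"
  by (rule cneg_unique[of _ "src K h" "tgt K f"]) (simp_all flip: cadd_cmp)

lemma dag_cneg [simp]: "(\<boxminus>f)\<^sup>\<dagger> = \<boxminus>(f\<^sup>\<dagger>)"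
  by (rule cneg_unique[of _ "tgt K f" "src K f"]) (simp_all flip: dag_cadd)

lemma cadd_left_commute:
  "src K f = src K g \<Longrightarrow> tgt K f = tgt K g \<Longrightarrow> src K g = src K h \<Longrightarrow> tgt K g = tgt K h \<Longrightarrow>
   f \<boxplus> (g \<boxplus> h) = g \<boxplus> (f \<boxplus> h)"
  by (metis cadd_assoc cadd_commute)

lemma cadd_cneg_cancel_right [simp]:
  "src K f = src K g \<Longrightarrow> tgt K f = tgt K g \<Longrightarrow> f \<boxplus> (g \<boxplus> \<boxminus>f) = g"
  by (simp add: cadd_left_commute[of f g])

lemma pr1_dag_pr1_cmp [simp]: "tgt K f = A \<Longrightarrow> pr1 K A B \<cdot> (pr1 K A B)\<^sup>\<dagger> \<cdot> f = f"
  and pr2_dag_pr2_cmp [simp]: "tgt K f = B \<Longrightarrow> pr2 K A B \<cdot> (pr2 K A B)\<^sup>\<dagger> \<cdot> f = f"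
  and pr1_dag_pr2_cmp [simp]: "tgt K f = B \<Longrightarrow> pr1 K A B \<cdot> (pr2 K A B)\<^sup>\<dagger> \<cdot> f = czero K (src K f) A"
  and pr2_dag_pr1_cmp [simp]: "tgt K f = A \<Longrightarrow> pr2 K A B \<cdot> (pr1 K A B)\<^sup>\<dagger> \<cdot> f = czero K (src K f) B"
  by (simp_all flip: cmp_assoc)

lemma src_col2 [simp]: "src K x = src K y \<Longrightarrow> src K (col2 K x y) = src K x"
  and tgt_col2 [simp]: "src K x = src K y \<Longrightarrow> tgt K (col2 K x y) = bip K (tgt K x) (tgt K y)"
  unfolding col2_def by simp_all

lemma src_row2 [simp]: "tgt K a = tgt K b \<Longrightarrow> src K (row2 K a b) = bip K (src K a) (src K b)"
  and tgt_row2 [simp]: "tgt K a = tgt K b \<Longrightarrow> tgt K (row2 K a b) = tgt K a"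
  unfolding row2_def by simp_all

lemma pr1_col2 [simp]: "src K x = src K y \<Longrightarrow> tgt K x = A \<Longrightarrow> tgt K y = B \<Longrightarrow> pr1 K A B \<cdot> col2 K x y = x"
  and pr2_col2 [simp]: "src K x = src K y \<Longrightarrow> tgt K x = A \<Longrightarrow> tgt K y = B \<Longrightarrow> pr2 K A B \<cdot> col2 K x y = y"
  unfolding col2_def by simp_all

lemma row2_dag_pr1 [simp]:
    "tgt K a = tgt K b \<Longrightarrow> src K a = A \<Longrightarrow> src K b = B \<Longrightarrow> row2 K a b \<cdot> (pr1 K A B)\<^sup>\<dagger> = a"
  and row2_dag_pr2 [simp]:
    "tgt K a = tgt K b \<Longrightarrow> src K a = A \<Longrightarrow> src K b = B \<Longrightarrow> row2 K a b \<cdot> (pr2 K A B)\<^sup>\<dagger> = b"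
  unfolding row2_def by simp_all

lemma col2_eta: "tgt K m = bip K A B \<Longrightarrow> col2 K (pr1 K A B \<cdot> m) (pr2 K A B \<cdot> m) = m"
  unfolding col2_def by (simp flip: cmp_assoc cadd_cmp add: biproduct_cid)

lemma row2_eta: "src K m = bip K A B \<Longrightarrow> row2 K (m \<cdot> (pr1 K A B)\<^sup>\<dagger>) (m \<cdot> (pr2 K A B)\<^sup>\<dagger>) = m"
  unfolding row2_def by (simp flip: cmp_cadd add: biproduct_cid)

lemma col2_cmp [simp]: "src K x = src K y \<Longrightarrow> tgt K f = src K x \<Longrightarrow> col2 K x y \<cdot> f = col2 K (x \<cdot> f) (y \<cdot> f)"
  unfolding col2_def by simp

lemma cmp_row2 [simp]: "tgt K a = tgt K b \<Longrightarrow> src K g = tgt K a \<Longrightarrow> g \<cdot> row2 K a b = row2 K (g \<cdot> a) (g \<cdot> b)"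
  unfolding row2_def by simp

lemma row2_cmp_col2 [simp]:
  "src K x = src K y \<Longrightarrow> tgt K a = tgt K b \<Longrightarrow> src K a = tgt K x \<Longrightarrow> src K b = tgt K y \<Longrightarrow>
   row2 K a b \<cdot> col2 K x y = a \<cdot> x \<boxplus> b \<cdot> y"
  unfolding row2_def by simp

lemma dag_col2 [simp]: "src K x = src K y \<Longrightarrow> (col2 K x y)\<^sup>\<dagger> = row2 K (x\<^sup>\<dagger>) (y\<^sup>\<dagger>)"
  unfolding row2_def col2_def by simp

lemma dag_row2 [simp]: "tgt K a = tgt K b \<Longrightarrow> (row2 K a b)\<^sup>\<dagger> = col2 K (a\<^sup>\<dagger>) (b\<^sup>\<dagger>)"
  unfolding row2_def col2_def by simp

lemma col2_cadd [simp]: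
  "src K x = src K y \<Longrightarrow> src K x' = src K y' \<Longrightarrow> src K x = src K x' \<Longrightarrow>
   tgt K x = tgt K x' \<Longrightarrow> tgt K y = tgt K y' \<Longrightarrow>
   col2 K x y \<boxplus> col2 K x' y' = col2 K (x \<boxplus> x') (y \<boxplus> y')"
  by (rule trans[OF col2_eta[symmetric, of _ "tgt K x" "tgt K y"]]) simp_all

lemma row2_cadd [simp]:
  "tgt K a = tgt K b \<Longrightarrow> tgt K a' = tgt K b' \<Longrightarrow> tgt K a = tgt K a' \<Longrightarrow>
   src K a = src K a' \<Longrightarrow> src K b = src K b' \<Longrightarrow>
   row2 K a b \<boxplus> row2 K a' b' = row2 K (a \<boxplus> a') (b \<boxplus> b')"
  by (rule trans[OF row2_eta[symmetric, of _ "src K a" "src K b"]]) simp_all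

lemma row2_col2_eq_col2_row2 [simp]:
  "src K a = src K c \<Longrightarrow> src K b = src K d \<Longrightarrow> tgt K a = tgt K b \<Longrightarrow> tgt K c = tgt K d \<Longrightarrow>
   row2 K (col2 K a c) (col2 K b d) = col2 K (row2 K a b) (row2 K c d)"
  by (rule trans[OF col2_eta[symmetric, of _ "tgt K a" "tgt K c"]]) simp_all

lemma pr1_eq_row2: "pr1 K A B = row2 K (cid K A) (czero K B A)"
  by (rule trans[OF row2_eta[symmetric, of _ A B]]) simp_all

lemma pr2_eq_row2: "pr2 K A B = row2 K (czero K A B) (cid K B)"
  by (rule trans[OF row2_eta[symmetric, of _ A B]]) simp_all


lemma conditional_composite_block:
  assumes "src K f = A" "tgt K f = B" "src K g = A" "tgt K g = C"
    and "src K \<alpha> = B" "tgt K \<alpha> = B" "src K \<beta> = C" "tgt K \<beta> = B" "src K \<delta> = C" "tgt K \<delta> = C"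
    and "src K s = X" "tgt K s = B" "src K t = X" "tgt K t = C"
    and "src K k = B" "tgt K k = C" "src K h = A" "tgt K h = C"
    and "src K q = C" "tgt K q = C" "src K y = X" "tgt K y = C"
  shows "conditional_composite K X A B C (col2 K f g, mat2 K \<alpha> \<beta> (\<beta>\<^sup>\<dagger>) \<delta>, col2 K s t) (row2 K k h, q, y)
    = (col2 K f (k \<cdot> f \<boxplus> h), mat2 K \<alpha> (\<alpha> \<cdot> k\<^sup>\<dagger>) (k \<cdot> \<alpha>) (q \<boxplus> k \<cdot> \<alpha> \<cdot> k\<^sup>\<dagger>), col2 K s (y \<boxplus> k \<cdot> s))"
  using assms
  by (simp add: conditional_composite_def gcomp_def gtensor_def gid_def glift_def gcopy_def gdel_def
      bassoc_def dsum_def mat2_def pr1_eq_row2 pr2_eq_row2)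


lemma mp_inverseD:
  assumes "mp_inverse K f h"
  shows "src K h = tgt K f" "tgt K h = src K f" "f \<cdot> h \<cdot> f = f" "h \<cdot> f \<cdot> h = h"
    "h\<^sup>\<dagger> \<cdot> f\<^sup>\<dagger> = f \<cdot> h" "f\<^sup>\<dagger> \<cdot> h\<^sup>\<dagger> = h \<cdot> f"
  using assms unfolding mp_inverse_def by auto

lemma mp_inverse_factor_gram:
  assumes "mp_inverse K \<phi> p"
  shows "p\<^sup>\<dagger> \<cdot> \<phi>\<^sup>\<dagger> \<cdot> \<phi> = \<phi>" and "\<phi>\<^sup>\<dagger> \<cdot> \<phi> \<cdot> p = \<phi>\<^sup>\<dagger>"
proof -
  note p = mp_inverseD[OF assms]
  have "p\<^sup>\<dagger> \<cdot> \<phi>\<^sup>\<dagger> \<cdot> \<phi> = (p\<^sup>\<dagger> \<cdot> \<phi>\<^sup>\<dagger>) \<cdot> \<phi>" using p(1,2) by simp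
  also have "\<dots> = \<phi>" using p by simp
  finally show "p\<^sup>\<dagger> \<cdot> \<phi>\<^sup>\<dagger> \<cdot> \<phi> = \<phi>" .
  then have "(p\<^sup>\<dagger> \<cdot> \<phi>\<^sup>\<dagger> \<cdot> \<phi>)\<^sup>\<dagger> = \<phi>\<^sup>\<dagger>" by simp
  then show "\<phi>\<^sup>\<dagger> \<cdot> \<phi> \<cdot> p = \<phi>\<^sup>\<dagger>" using p(1,2) by simp
qed

lemma mp_inverse_gram_absorb:
  assumes "mp_inverse K \<phi> p" and "mp_inverse K (\<phi>\<^sup>\<dagger> \<cdot> \<phi>) a"
  shows "\<phi> \<cdot> a \<cdot> \<phi>\<^sup>\<dagger> \<cdot> \<phi> = \<phi>"
proof -
  note p = mp_inverseD[OF assms(1)] and a = mp_inverseD[OF assms(2)]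
  have "\<phi> \<cdot> a \<cdot> \<phi>\<^sup>\<dagger> \<cdot> \<phi> = p\<^sup>\<dagger> \<cdot> (\<phi>\<^sup>\<dagger> \<cdot> \<phi>) \<cdot> a \<cdot> (\<phi>\<^sup>\<dagger> \<cdot> \<phi>)"
    by (subst (1) mp_inverse_factor_gram(1)[OF assms(1), symmetric]) (use p a in simp)
  also have "\<dots> = \<phi>" using p a mp_inverse_factor_gram(1)[OF assms(1)] by simp
  finally show ?thesis .
qed

lemma dag_positive_complement_projection:
  assumes "src K Q = D" "tgt K Q = D" "Q\<^sup>\<dagger> = Q" "Q \<cdot> Q = Q" "tgt K \<psi> = D"
  shows "dag_positive K (csub K (\<psi>\<^sup>\<dagger> \<cdot> \<psi>) (\<psi>\<^sup>\<dagger> \<cdot> Q \<cdot> \<psi>))"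
proof -
  define R where "R = csub K (cid K D) Q"
  have R: "src K R = D" "tgt K R = D" "R\<^sup>\<dagger> = R" unfolding R_def csub_def using assms by simp_all
  have "R \<cdot> R = R" unfolding R_def csub_def using assms by simp
  then have "R \<cdot> R \<cdot> \<psi> = R \<cdot> \<psi>" using R assms(5) by (metis cmp_assoc)
  then have "(R \<cdot> \<psi>)\<^sup>\<dagger> \<cdot> R \<cdot> \<psi> = \<psi>\<^sup>\<dagger> \<cdot> R \<cdot> \<psi>" using R assms(5) by simp
  also have "\<dots> = csub K (\<psi>\<^sup>\<dagger> \<cdot> \<psi>) (\<psi>\<^sup>\<dagger> \<cdot> Q \<cdot> \<psi>)" unfolding R_def csub_def using assms by simp
  finally show ?thesis unfolding dag_positive_def by metis
qed

lemma dag_positive_block_factor: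
  assumes "src K \<alpha> = B" "tgt K \<alpha> = B" "src K \<beta> = C" "tgt K \<beta> = B" "src K \<delta> = C" "tgt K \<delta> = C"
    and "dag_positive K (mat2 K \<alpha> \<beta> (\<beta>\<^sup>\<dagger>) \<delta>)"
  obtains \<phi>\<^sub>1 \<phi>\<^sub>2 where "src K \<phi>\<^sub>1 = B" "src K \<phi>\<^sub>2 = C" "tgt K \<phi>\<^sub>1 = tgt K \<phi>\<^sub>2"
    "\<alpha> = \<phi>\<^sub>1\<^sup>\<dagger> \<cdot> \<phi>\<^sub>1" "\<beta> = \<phi>\<^sub>1\<^sup>\<dagger> \<cdot> \<phi>\<^sub>2" "\<delta> = \<phi>\<^sub>2\<^sup>\<dagger> \<cdot> \<phi>\<^sub>2"
proof -
  obtain \<phi> where \<phi>: "mat2 K \<alpha> \<beta> (\<beta>\<^sup>\<dagger>) \<delta> = \<phi>\<^sup>\<dagger> \<cdot> \<phi>"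
    using assms(7) unfolding dag_positive_def by blast
  have "src K (\<phi>\<^sup>\<dagger> \<cdot> \<phi>) = bip K B C" using assms(1-6) by (simp flip: \<phi> add: mat2_def)
  then have src_\<phi>: "src K \<phi> = bip K B C" by simp
  let ?\<phi>\<^sub>1 = "\<phi> \<cdot> (pr1 K B C)\<^sup>\<dagger>" and ?\<phi>\<^sub>2 = "\<phi> \<cdot> (pr2 K B C)\<^sup>\<dagger>"
  have "\<alpha> = pr1 K B C \<cdot> mat2 K \<alpha> \<beta> (\<beta>\<^sup>\<dagger>) \<delta> \<cdot> (pr1 K B C)\<^sup>\<dagger>"
    and "\<beta> = pr1 K B C \<cdot> mat2 K \<alpha> \<beta> (\<beta>\<^sup>\<dagger>) \<delta> \<cdot> (pr2 K B C)\<^sup>\<dagger>"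
    and "\<delta> = pr2 K B C \<cdot> mat2 K \<alpha> \<beta> (\<beta>\<^sup>\<dagger>) \<delta> \<cdot> (pr2 K B C)\<^sup>\<dagger>"
    using assms(1-6) by (simp_all add: mat2_def)
  then have "\<alpha> = ?\<phi>\<^sub>1\<^sup>\<dagger> \<cdot> ?\<phi>\<^sub>1" "\<beta> = ?\<phi>\<^sub>1\<^sup>\<dagger> \<cdot> ?\<phi>\<^sub>2" "\<delta> = ?\<phi>\<^sub>2\<^sup>\<dagger> \<cdot> ?\<phi>\<^sub>2"
    unfolding \<phi> using src_\<phi> by simp_all
  then show thesis using src_\<phi> by (intro that[of ?\<phi>\<^sub>1 ?\<phi>\<^sub>2]) simp_all
qed

lemma positive_block_mp_inverse:
  assumes mp: "moore_penrose K"
    and types: "src K \<alpha> = B" "tgt K \<alpha> = B" "src K \<beta> = C" "tgt K \<beta> = B" "src K \<delta> = C" "tgt K \<delta> = C"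
    and pos: "dag_positive K (mat2 K \<alpha> \<beta> (\<beta>\<^sup>\<dagger>) \<delta>)" and a: "mp_inverse K \<alpha> a"
  shows "\<beta>\<^sup>\<dagger> \<cdot> a \<cdot> \<alpha> = \<beta>\<^sup>\<dagger>" "\<alpha> \<cdot> a\<^sup>\<dagger> \<cdot> \<beta> = \<beta>"
    "dag_positive K (csub K \<delta> (\<beta>\<^sup>\<dagger> \<cdot> a \<cdot> \<beta>))"
proof -
  obtain \<phi>\<^sub>1 \<phi>\<^sub>2 where \<phi>: "src K \<phi>\<^sub>1 = B" "src K \<phi>\<^sub>2 = C" "tgt K \<phi>\<^sub>1 = tgt K \<phi>\<^sub>2"
    and \<alpha>: "\<alpha> = \<phi>\<^sub>1\<^sup>\<dagger> \<cdot> \<phi>\<^sub>1" and \<beta>: "\<beta> = \<phi>\<^sub>1\<^sup>\<dagger> \<cdot> \<phi>\<^sub>2" and \<delta>: "\<delta> = \<phi>\<^sub>2\<^sup>\<dagger> \<cdot> \<phi>\<^sub>2"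
    using dag_positive_block_factor[OF types pos] by blast
  obtain p where p: "mp_inverse K \<phi>\<^sub>1 p" using mp unfolding moore_penrose_def by blast
  note a' = mp_inverseD[OF a] and p' = mp_inverseD[OF p]
  have absorb: "\<phi>\<^sub>1 \<cdot> a \<cdot> \<alpha> = \<phi>\<^sub>1"
    using mp_inverse_gram_absorb[OF p] a unfolding \<alpha> by blast
  show \<beta>_absorb: "\<beta>\<^sup>\<dagger> \<cdot> a \<cdot> \<alpha> = \<beta>\<^sup>\<dagger>"
    unfolding \<beta> using \<phi> a' types absorb by simp
  have "\<alpha>\<^sup>\<dagger> = \<alpha>" unfolding \<alpha> by simp
  then have "(\<beta>\<^sup>\<dagger> \<cdot> a \<cdot> \<alpha>)\<^sup>\<dagger> = \<alpha> \<cdot> a\<^sup>\<dagger> \<cdot> \<beta>"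
    using a'(1,2) types by simp
  then show "\<alpha> \<cdot> a\<^sup>\<dagger> \<cdot> \<beta> = \<beta>" using \<beta>_absorb by simp
  have "\<phi>\<^sub>1 \<cdot> a \<cdot> \<phi>\<^sub>1\<^sup>\<dagger> = \<phi>\<^sub>1 \<cdot> a \<cdot> \<alpha> \<cdot> p"
    using \<phi> p'(1,2) a'(1,2) types by (simp add: \<alpha> mp_inverse_factor_gram(2)[OF p])
  also have "\<dots> = \<phi>\<^sub>1 \<cdot> p" using absorb \<phi> a' p' types by (simp flip: cmp_assoc)
  finally have projection: "\<phi>\<^sub>1 \<cdot> a \<cdot> \<phi>\<^sub>1\<^sup>\<dagger> = \<phi>\<^sub>1 \<cdot> p" .
  have "\<beta>\<^sup>\<dagger> \<cdot> a \<cdot> \<beta> = \<phi>\<^sub>2\<^sup>\<dagger> \<cdot> (\<phi>\<^sub>1 \<cdot> a \<cdot> \<phi>\<^sub>1\<^sup>\<dagger>) \<cdot> \<phi>\<^sub>2"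
    unfolding \<beta> using \<phi> a'(1,2) types by simp
  also have "\<dots> = \<phi>\<^sub>2\<^sup>\<dagger> \<cdot> (\<phi>\<^sub>1 \<cdot> p) \<cdot> \<phi>\<^sub>2" by (simp only: projection)
  finally have schur: "\<beta>\<^sup>\<dagger> \<cdot> a \<cdot> \<beta> = \<phi>\<^sub>2\<^sup>\<dagger> \<cdot> (\<phi>\<^sub>1 \<cdot> p) \<cdot> \<phi>\<^sub>2" .
  show "dag_positive K (csub K \<delta> (\<beta>\<^sup>\<dagger> \<cdot> a \<cdot> \<beta>))"
    unfolding \<delta> schur using \<phi> p' by (intro dag_positive_complement_projection) (simp_all flip: cmp_assoc)
qed

lemma is_conditional_block:
  assumes mp: "moore_penrose K"
    and types: "src K f = A" "tgt K f = B" "src K g = A" "tgt K g = C"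
      "src K \<alpha> = B" "tgt K \<alpha> = B" "src K \<beta> = C" "tgt K \<beta> = B" "src K \<delta> = C" "tgt K \<delta> = C"
      "src K s = X" "tgt K s = B" "src K t = X" "tgt K t = C"
    and pos: "dag_positive K (mat2 K \<alpha> \<beta> (\<beta>\<^sup>\<dagger>) \<delta>)" and a: "mp_inverse K \<alpha> a"
  shows "is_conditional K X A B C (col2 K f g, mat2 K \<alpha> \<beta> (\<beta>\<^sup>\<dagger>) \<delta>, col2 K s t)
    (row2 K (\<beta>\<^sup>\<dagger> \<cdot> a) (csub K g (\<beta>\<^sup>\<dagger> \<cdot> a \<cdot> f)), csub K \<delta> (\<beta>\<^sup>\<dagger> \<cdot> a \<cdot> \<beta>), csub K t (\<beta>\<^sup>\<dagger> \<cdot> a \<cdot> s))"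
proof -
  note block = positive_block_mp_inverse[OF mp types(5-10) pos a]
  have a_types: "src K a = B" "tgt K a = B" using mp_inverseD(1,2)[OF a] types by simp_all
  show ?thesis
    unfolding is_conditional_iff gmap_def hom_def using types a_types block
    by (simp add: conditional_composite_block csub_def)
qed

lemma dag_positive_self_adjoint: "dag_positive K p \<Longrightarrow> p\<^sup>\<dagger> = p"
  unfolding dag_positive_def by auto

lemma mat2_eta:
  assumes "src K p = bip K B C" "tgt K p = bip K B C"
  shows "mat2 K (pr1 K B C \<cdot> p \<cdot> (pr1 K B C)\<^sup>\<dagger>) (pr1 K B C \<cdot> p \<cdot> (pr2 K B C)\<^sup>\<dagger>)
                (pr2 K B C \<cdot> p \<cdot> (pr1 K B C)\<^sup>\<dagger>) (pr2 K B C \<cdot> p \<cdot> (pr2 K B C)\<^sup>\<dagger>) = p"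
proof -
  have "mat2 K (pr1 K B C \<cdot> p \<cdot> (pr1 K B C)\<^sup>\<dagger>) (pr1 K B C \<cdot> p \<cdot> (pr2 K B C)\<^sup>\<dagger>)
                (pr2 K B C \<cdot> p \<cdot> (pr1 K B C)\<^sup>\<dagger>) (pr2 K B C \<cdot> p \<cdot> (pr2 K B C)\<^sup>\<dagger>)
      = col2 K (pr1 K B C \<cdot> row2 K (p \<cdot> (pr1 K B C)\<^sup>\<dagger>) (p \<cdot> (pr2 K B C)\<^sup>\<dagger>))
               (pr2 K B C \<cdot> row2 K (p \<cdot> (pr1 K B C)\<^sup>\<dagger>) (p \<cdot> (pr2 K B C)\<^sup>\<dagger>))"
    unfolding mat2_def using assms by simp
  also have "\<dots> = p" using assms by (simp add: row2_eta col2_eta)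
  finally show ?thesis .
qed

lemma conditional_exists:
  assumes mp: "moore_penrose K" and F: "gmap K X A (bip K B C) F"
  shows "\<exists>G. is_conditional K X A B C F G"
proof -
  obtain h p x where F_eq: "F = (h, p, x)" by (cases F)
  have types: "src K h = A" "tgt K h = bip K B C" "src K p = bip K B C" "tgt K p = bip K B C"
      "src K x = X" "tgt K x = bip K B C" and pos: "dag_positive K p"
    using F unfolding F_eq gmap_def hom_def by auto
  define \<alpha> where "\<alpha> = pr1 K B C \<cdot> p \<cdot> (pr1 K B C)\<^sup>\<dagger>"
  define \<beta> where "\<beta> = pr1 K B C \<cdot> p \<cdot> (pr2 K B C)\<^sup>\<dagger>"
  define \<delta> where "\<delta> = pr2 K B C \<cdot> p \<cdot> (pr2 K B C)\<^sup>\<dagger>"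
  have "\<beta>\<^sup>\<dagger> = pr2 K B C \<cdot> p \<cdot> (pr1 K B C)\<^sup>\<dagger>"
    unfolding \<beta>_def using types dag_positive_self_adjoint[OF pos] by simp
  then have p_eq: "p = mat2 K \<alpha> \<beta> (\<beta>\<^sup>\<dagger>) \<delta>"
    unfolding \<alpha>_def \<beta>_def \<delta>_def using mat2_eta[OF types(3,4)] by simp
  have h_eta: "col2 K (pr1 K B C \<cdot> h) (pr2 K B C \<cdot> h) = h"
    and x_eta: "col2 K (pr1 K B C \<cdot> x) (pr2 K B C \<cdot> x) = x"
    using col2_eta types by blast+
  obtain a where "mp_inverse K \<alpha> a" using mp unfolding moore_penrose_def by blast
  then have "is_conditional K X A B C
      (col2 K (pr1 K B C \<cdot> h) (pr2 K B C \<cdot> h), mat2 K \<alpha> \<beta> (\<beta>\<^sup>\<dagger>) \<delta>, col2 K (pr1 K B C \<cdot> x) (pr2 K B C \<cdot> x))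
      (row2 K (\<beta>\<^sup>\<dagger> \<cdot> a) (csub K (pr2 K B C \<cdot> h) (\<beta>\<^sup>\<dagger> \<cdot> a \<cdot> pr1 K B C \<cdot> h)), csub K \<delta> (\<beta>\<^sup>\<dagger> \<cdot> a \<cdot> \<beta>),
       csub K (pr2 K B C \<cdot> x) (\<beta>\<^sup>\<dagger> \<cdot> a \<cdot> pr1 K B C \<cdot> x))"
    using mp pos[unfolded p_eq] types unfolding \<alpha>_def \<beta>_def \<delta>_def
    by (intro is_conditional_block) simp_all
  then show ?thesis unfolding F_eq p_eq h_eta x_eta by blast
qed

end

theorem mainTheorem11:
  fixes K :: "('o, 'm) dacat" and X :: 'o
  assumes dac: "dagger_additive_cat K" and mp: "moore_penrose K"
  shows "(\<forall>A B C F. gmap K X A (bip K B C) F \<longrightarrow> (\<exists>G. is_conditional K X A B C F G))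
    \<and> (\<forall>A B C f g \<alpha> \<beta> \<delta> s t \<alpha>o.
         f \<in> hom K A B \<longrightarrow> g \<in> hom K A C \<longrightarrow> \<alpha> \<in> hom K B B \<longrightarrow> \<beta> \<in> hom K C B \<longrightarrow>
         \<delta> \<in> hom K C C \<longrightarrow> s \<in> hom K X B \<longrightarrow> t \<in> hom K X C \<longrightarrow>
         dag_positive K (mat2 K \<alpha> \<beta> (dag K \<beta>) \<delta>) \<longrightarrow>
         mp_inverse K \<alpha> \<alpha>o \<longrightarrow>
         is_conditional K X A B C
           (col2 K f g, mat2 K \<alpha> \<beta> (dag K \<beta>) \<delta>, col2 K s t)
           (row2 K (cmp K (dag K \<beta>) \<alpha>o) (csub K g (cmp K (dag K \<beta>) (cmp K \<alpha>o f))),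
            csub K \<delta> (cmp K (dag K \<beta>) (cmp K \<alpha>o \<beta>)),
            csub K t (cmp K (dag K \<beta>) (cmp K \<alpha>o s))))"
proof -
  interpret dagger_additive_category K by (rule dagger_additive_category.intro[OF dac])
  show ?thesis
    using conditional_exists[OF mp] is_conditional_block[OF mp] unfolding hom_def by auto
qed

end
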